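(* For any Young diagram $Y$, $$\frac{2\sum_{u\in Y}c(u)}{H_Y}=\sum_{(x,y)\in Cor(Y)}\frac{y-x}{H_{Y\setminus\{(x,y)\}}}$$ and $$\frac{2\sum_{u\in Y}c(u)}{H_Y}=\sum_{hd\in HD(Y)}\frac{1}{H_{Y\setminus hd}}-\sum_{vd\in VD(Y)}\frac{1}{H_{Y\setminus vd}}.$$
   Context: Boxes of a Young diagram (English convention, rows left-justified, weakly decreasing from top) are written $(x,y)$ for the box in the $x$-th row from the top and $y$-th column from the left. The content of $u=(x,y)$ is $c(u)=y-x$. The hook length $h(u)$ is the number of boxes in the same column below $u$ or in the same row to its right, including $u$; $H_Y=\prod_{u\in Y}h(u)$, with $H_\emptyset=1$. $Cor(Y)$ is the set of corners: boxes with no box below them and no box to their right. $HD(Y)$ (resp. $VD(Y)$) is the set of horizontal (resp. vertical) dominos removable from $Y$, i.e. pairs of adjacent boxes in the same row (resp. same column) whose removal from $Y$ leaves a Young diagram. *)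

theory Defs
  imports Complex_Main
begin

text \<open>Young diagrams (English convention) as finite sets of boxes (x,y), 1-based:
  x = row index from top, y = column index from left.  Downward closure in both
  coordinates encodes left-justified rows of weakly decreasing length.\<close>

definition young_diagram :: "(nat \<times> nat) set \<Rightarrow> bool" where
  "young_diagram Y \<longleftrightarrow> finite Y \<and> (\<forall>(x,y)\<in>Y. 1 \<le> x \<and> 1 \<le> y) \<and>
     (\<forall>x y x' y'. (x,y) \<in> Y \<and> 1 \<le> x' \<and> x' \<le> x \<and> 1 \<le> y' \<and> y' \<le> y \<longrightarrow> (x',y') \<in> Y)"

definition content :: "nat \<times> nat \<Rightarrow> int" where
  "content u = int (snd u) - int (fst u)"

definition hook :: "(nat \<times> nat) set \<Rightarrow> nat \<times> nat \<Rightarrow> nat" where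
  "hook Y u = card {v \<in> Y. snd v = snd u \<and> fst v \<ge> fst u}
            + card {v \<in> Y. fst v = fst u \<and> snd v > snd u}"

definition hook_prod :: "(nat \<times> nat) set \<Rightarrow> nat" where
  "hook_prod Y = (\<Prod>u\<in>Y. hook Y u)"

definition corners :: "(nat \<times> nat) set \<Rightarrow> (nat \<times> nat) set" where
  "corners Y = {(x,y) \<in> Y. (x+1,y) \<notin> Y \<and> (x,y+1) \<notin> Y}"

definition HD :: "(nat \<times> nat) set \<Rightarrow> (nat \<times> nat) set set" where
  "HD Y = {{(x,y),(x,y+1)} | x y. (x,y) \<in> Y \<and> (x,y+1) \<in> Y \<and>
                                 young_diagram (Y - {(x,y),(x,y+1)})}"

definition VD :: "(nat \<times> nat) set \<Rightarrow> (nat \<times> nat) set set" where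
  "VD Y = {{(x,y),(x+1,y)} | x y. (x,y) \<in> Y \<and> (x+1,y) \<in> Y \<and>
                                 young_diagram (Y - {(x,y),(x+1,y)})}"

end

theory Submission
  imports Defs "HOL-Real_Asymp.Real_Asymp"
begin

(* Let Y be a Young diagram with N boxes, \<lambda>_i the length of row i, and
   d_i = \<lambda>_i - i (i = 1..N) the content of the last box of row i; the d_i are distinct.

   1. In  z \<Prod>_{u\<in>Y} (1 - 1/(z - c(u))^2)  the factors of each row telescope, giving
      z \<Prod>_u (1 - 1/(z - c(u))^2) = (z + N) \<Prod>_i (1 - 1/(z - d_i)).
   2. Write the right-hand side as z + \<Sum>_i \<rho>_i/(z - d_i) (partial fractions).  Comparing
      the expansions of both sides at z \<rightarrow> \<infinity> gives
      \<Sum>_i \<rho>_i = -N  and  \<Sum>_i d_i \<rho>_i = -2 \<Sum>_u c(u).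
   3. \<rho>_i vanishes unless row i ends in a corner u = (i, \<lambda>_i), and then the hook lengths
      give H_Y / H_{Y-u} = -\<rho>_i.  This yields the first identity (and \<Sum>_u H_Y/H_{Y-u} = N).
   4. Applying the first identity to Y - u for each corner u expresses 2 \<Sum> c / H_Y as a sum
      of (c(u) - c(v)) / H_{Y-u-v} over corners u of Y and v of Y - u.  Non-adjacent pairs
      cancel by antisymmetry, and adjacent pairs are the removable horizontal (c(u)-c(v) = 1)
      and vertical (c(u)-c(v) = -1) dominos: the second identity. *)

section \<open>Partial fractions\<close>

lemma partial_fraction_step:
  fixes a x y z :: real
  assumes "z \<noteq> x" "z \<noteq> y" "x \<noteq> y"
  shows "a/(z-x)*(1-1/(z-y)) = a*(1-1/(x-y))/(z-x) - a/(y-x)/(z-y)"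
proof -
  have nz: "z - x \<noteq> 0" "z - y \<noteq> 0" "x - y \<noteq> 0" "y - x \<noteq> 0" using assms by auto
  have e1: "1-1/(z-y) = (z-y-1)/(z-y)" and e2: "1-1/(x-y) = (x-y-1)/(x-y)"
    and e3: "a/(y-x) = - a/(x-y)" using nz by (simp_all add: field_simps)
  show ?thesis unfolding e1 e2 e3 using nz by (simp add: divide_simps) (simp add: algebra_simps)
qed

(* The coefficient of 1/(z - d i) in the partial fraction expansion of
  \<Prod>k\<in>S. 1 - 1/(z - d k) (its residue at the simple pole d i). *)
definition pf_coeff :: "'a set \<Rightarrow> ('a \<Rightarrow> real) \<Rightarrow> 'a \<Rightarrow> real" where
  "pf_coeff S d i = - (\<Prod>k\<in>S-{i}. 1 - 1/(d i - d k))"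

lemma partial_fractions:
  assumes "finite S" "inj_on d S" "z \<notin> d ` S"
  shows "(\<Prod>k\<in>S. 1 - 1/(z - d k)) = 1 + (\<Sum>i\<in>S. pf_coeff S d i / (z - d i))"
  using assms
proof (induction S arbitrary: z rule: finite_induct)
  case empty
  then show ?case by simp
next
  case (insert e S)
  let ?a = "pf_coeff S d" and ?a' = "pf_coeff (insert e S) d"
  have injS: "inj_on d S" and de: "d e \<notin> d ` S" and zS: "z \<notin> d ` S" and ze: "z \<noteq> d e"
    using insert.prems insert.hyps by auto
  have coeff_new: "?a' e = - (1 + (\<Sum>i\<in>S. ?a i / (d e - d i)))"
    using insert.IH[OF injS de] insert.hyps unfolding pf_coeff_def by simp
  have coeff_old: "?a' i = ?a i * (1 - 1/(d i - d e))" if "i \<in> S" for i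
  proof -
    have "insert e S - {i} = insert e (S - {i})" using that insert.hyps by auto
    then show ?thesis unfolding pf_coeff_def using insert.hyps that by (simp add: prod.insert_remove)
  qed
  have summand: "?a i / (z - d i) * (1 - 1/(z - d e)) =
      ?a' i / (z - d i) - ?a i / (d e - d i) / (z - d e)" if "i \<in> S" for i
    unfolding coeff_old[OF that]
    by (rule partial_fraction_step) (use that zS ze de in \<open>auto simp: image_iff\<close>)
  have "(\<Prod>k\<in>insert e S. 1 - 1/(z - d k)) = (1 - 1/(z - d e)) * (1 + (\<Sum>i\<in>S. ?a i / (z - d i)))"
    using insert.IH[OF injS zS] insert.hyps by simp
  also have "\<dots> = 1 - 1/(z - d e) + (\<Sum>i\<in>S. ?a i / (z - d i) * (1 - 1/(z - d e)))"
    by (simp add: sum_distrib_left algebra_simps)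
  also have "\<dots> = 1 - 1/(z - d e) + (\<Sum>i\<in>S. ?a' i / (z - d i) - ?a i / (d e - d i) / (z - d e))"
    using sum.cong[OF refl summand] by simp
  also have "\<dots> = 1 - 1/(z - d e) + (\<Sum>i\<in>S. ?a' i / (z - d i))
        - (\<Sum>i\<in>S. ?a i / (d e - d i)) / (z - d e)"
    by (simp only: sum_subtractf sum_divide_distrib add_diff_eq)
  also have "\<dots> = 1 + (\<Sum>i\<in>S. ?a' i / (z - d i)) + ?a' e / (z - d e)"
    unfolding coeff_new by (simp add: add_divide_distrib diff_divide_distrib)
  also have "\<dots> = 1 + (\<Sum>i\<in>insert e S. ?a' i / (z - d i))"
    using insert.hyps by simp
  finally show ?case .
qed

lemma shifted_partial_fractions:
  assumes "finite S" "inj_on d S" "z \<notin> d ` S"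
  shows "(z + K) * (\<Prod>k\<in>S. 1 - 1/(z - d k)) =
         z + K + (\<Sum>i\<in>S. pf_coeff S d i) + (\<Sum>i\<in>S. pf_coeff S d i * (d i + K) / (z - d i))"
proof -
  have split: "(z + K) * (pf_coeff S d i / (z - d i)) =
      pf_coeff S d i + pf_coeff S d i * (d i + K) / (z - d i)" if "i \<in> S" for i
  proof -
    have "z - d i \<noteq> 0" using assms(3) that by auto
    then show ?thesis by (simp add: field_simps)
  qed
  have "(\<Sum>i\<in>S. (z + K) * (pf_coeff S d i / (z - d i))) =
      (\<Sum>i\<in>S. pf_coeff S d i + pf_coeff S d i * (d i + K) / (z - d i))"
    by (rule sum.cong[OF refl split])
  then show ?thesis
    unfolding partial_fractions[OF assms] distrib_left sum_distrib_left
    by (simp add: sum.distrib)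
qed

section \<open>Expansions at infinity\<close>

lemma eventually_not_in_finite:
  fixes A :: "real set"
  assumes "finite A"
  shows "eventually (\<lambda>z. z \<notin> A) at_top"
  using eventually_gt_at_top[of "Max (insert 0 A)"]
  by eventually_elim (use assms in auto)

lemma lim_inverse: "((\<lambda>z::real. 1/z) \<longlongrightarrow> 0) at_top"
  by real_asymp
lemma lim_simple_fraction: "((\<lambda>z::real. a/(z - c)) \<longlongrightarrow> 0) at_top"
  by real_asymp
lemma lim_inverse_square: "((\<lambda>z::real. 1/(z - c)^2) \<longlongrightarrow> 0) at_top"
  by real_asymp
lemma lim_shift_ratio: "((\<lambda>z::real. z/(z - c)) \<longlongrightarrow> 1) at_top"
  by real_asymp
lemma lim_shift_ratio': "((\<lambda>z::real. z*c/(z - c)) \<longlongrightarrow> c) at_top"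
  by real_asymp
lemma lim_square_ratio: "((\<lambda>z::real. z^2 * (1/(z - c)^2)) \<longlongrightarrow> 1) at_top"
  by real_asymp
lemma lim_cube_ratio: "((\<lambda>z::real. z^3 * (1/(z - c)^2) - z) \<longlongrightarrow> 2*c) at_top"
  by real_asymp

lemma tendsto_zero_if_times_converges:
  fixes f :: "real \<Rightarrow> real"
  assumes "((\<lambda>z. z * f z) \<longlongrightarrow> a) at_top"
  shows "(f \<longlongrightarrow> 0) at_top"
proof -
  have "((\<lambda>z. (z * f z) * (1/z)) \<longlongrightarrow> a * 0) at_top"
    by (intro tendsto_intros assms lim_inverse)
  moreover have "eventually (\<lambda>z. (z * f z) * (1/z) = f z) at_top"
    using eventually_gt_at_top[of "0::real"] by eventually_elim simp
  ultimately show ?thesis using tendsto_cong by fastforce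
qed

lemma box_product_expansion:
  fixes c :: "'a \<Rightarrow> real"
  assumes "finite S"
  shows "((\<lambda>z. \<Prod>v\<in>S. 1 - 1/(z - c v)^2) \<longlongrightarrow> 1) at_top \<and>
         ((\<lambda>z. z^2 * (1 - (\<Prod>v\<in>S. 1 - 1/(z - c v)^2))) \<longlongrightarrow> real (card S)) at_top \<and>
         ((\<lambda>z. z^3 * (1 - (\<Prod>v\<in>S. 1 - 1/(z - c v)^2)) - real (card S) * z)
            \<longlongrightarrow> 2 * (\<Sum>v\<in>S. c v)) at_top"
  using assms
proof (induction S rule: finite_induct)
  case empty
  then show ?case by simp
next
  case (insert a S)
  define P where "P = (\<lambda>z. \<Prod>v\<in>S. 1 - 1/(z - c v)^2)"
  define n where "n = real (card S)"
  have P1: "(P \<longlongrightarrow> 1) at_top" and P2: "((\<lambda>z. z^2 * (1 - P z)) \<longlongrightarrow> n) at_top"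
    and P3: "((\<lambda>z. z^3 * (1 - P z) - n * z) \<longlongrightarrow> 2 * (\<Sum>v\<in>S. c v)) at_top"
    using insert.IH unfolding P_def n_def by auto
  have prod_insert: "(\<Prod>v\<in>insert a S. 1 - 1/(z - c v)^2) = (1 - 1/(z - c a)^2) * P z" for z
    using insert.hyps unfolding P_def by simp
  have card_insert: "real (card (insert a S)) = n + 1" using insert.hyps unfolding n_def by simp
  have sum_insert: "(\<Sum>v\<in>insert a S. c v) = c a + (\<Sum>v\<in>S. c v)" using insert.hyps by simp
  have zP: "((\<lambda>z. z * (P z - 1)) \<longlongrightarrow> 0) at_top"
  proof (rule tendsto_zero_if_times_converges)
    have "(\<lambda>z. z * (z * (P z - 1))) = (\<lambda>z. - (z^2 * (1 - P z)))"
      by (simp add: fun_eq_iff power2_eq_square algebra_simps)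
    then show "((\<lambda>z. z * (z * (P z - 1))) \<longlongrightarrow> - n) at_top" using tendsto_minus[OF P2] by simp
  qed
  have L1: "((\<lambda>z. (1 - 1/(z - c a)^2) * P z) \<longlongrightarrow> (1 - 0) * 1) at_top"
    by (intro tendsto_intros lim_inverse_square P1)
  have L2: "((\<lambda>z. z^2 * (1 - P z) + (z^2 * (1/(z - c a)^2)) * P z) \<longlongrightarrow> n + 1 * 1) at_top"
    by (intro tendsto_intros lim_square_ratio P1 P2)
  have L3: "((\<lambda>z. (z^3 * (1 - P z) - n * z) + (z^3 * (1/(z - c a)^2) - z) * P z + z * (P z - 1))
      \<longlongrightarrow> 2 * (\<Sum>v\<in>S. c v) + 2 * c a * 1 + 0) at_top"
    by (intro tendsto_intros lim_cube_ratio P1 P3 zP)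
  show ?case
    using L1 L2 L3 unfolding prod_insert card_insert sum_insert by (simp add: algebra_simps)
qed

lemma simple_fractions_expansion:
  fixes \<rho> d :: "'a \<Rightarrow> real"
  assumes "finite I"
  defines "R \<equiv> \<lambda>z. \<Sum>i\<in>I. \<rho> i / (z - d i)"
  shows "(R \<longlongrightarrow> 0) at_top"
    and "((\<lambda>z. z * R z) \<longlongrightarrow> (\<Sum>i\<in>I. \<rho> i)) at_top"
    and "((\<lambda>z. z * (z * R z - (\<Sum>i\<in>I. \<rho> i))) \<longlongrightarrow> (\<Sum>i\<in>I. \<rho> i * d i)) at_top"
proof -
  show "(R \<longlongrightarrow> 0) at_top"
    using tendsto_sum[of I "\<lambda>i z. \<rho> i / (z - d i)" "\<lambda>_. 0"] lim_simple_fraction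
    unfolding R_def by simp
  have "z * R z = (\<Sum>i\<in>I. \<rho> i * (z / (z - d i)))" for z
    unfolding R_def by (simp add: sum_distrib_left ac_simps)
  moreover have "((\<lambda>z. \<Sum>i\<in>I. \<rho> i * (z / (z - d i))) \<longlongrightarrow> (\<Sum>i\<in>I. \<rho> i * 1)) at_top"
    by (intro tendsto_intros lim_shift_ratio)
  ultimately show "((\<lambda>z. z * R z) \<longlongrightarrow> (\<Sum>i\<in>I. \<rho> i)) at_top" by simp
  have "eventually (\<lambda>z. (\<Sum>i\<in>I. \<rho> i * (z * d i / (z - d i))) = z * (z * R z - (\<Sum>i\<in>I. \<rho> i))) at_top"
    using eventually_not_in_finite[OF finite_imageI[OF assms(1), of d]]
  proof eventually_elim
    case (elim z)
    have "\<rho> i * (z * d i / (z - d i)) = z * (z * (\<rho> i / (z - d i)) - \<rho> i)" if "i \<in> I" for i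
    proof -
      have "z - d i \<noteq> 0" using elim that by auto
      then show ?thesis by (simp add: field_simps)
    qed
    then have "(\<Sum>i\<in>I. \<rho> i * (z * d i / (z - d i))) = (\<Sum>i\<in>I. z * (z * (\<rho> i / (z - d i)) - \<rho> i))"
      by (rule sum.cong[OF refl])
    then show ?case
      unfolding R_def by (simp add: sum_distrib_left sum_subtractf right_diff_distrib)
  qed
  moreover have "((\<lambda>z. \<Sum>i\<in>I. \<rho> i * (z * d i / (z - d i))) \<longlongrightarrow> (\<Sum>i\<in>I. \<rho> i * d i)) at_top"
    by (intro tendsto_intros lim_shift_ratio')
  ultimately show "((\<lambda>z. z * (z * R z - (\<Sum>i\<in>I. \<rho> i))) \<longlongrightarrow> (\<Sum>i\<in>I. \<rho> i * d i)) at_top"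
    using tendsto_cong by fastforce
qed

lemma residue_moments:
  fixes c :: "'a \<Rightarrow> real" and d :: "'b \<Rightarrow> real"
  assumes S: "finite S" and I: "finite I" and inj: "inj_on d I"
    and eq: "eventually (\<lambda>z. z * (\<Prod>v\<in>S. 1 - 1/(z - c v)^2)
                              = (z + K) * (\<Prod>k\<in>I. 1 - 1/(z - d k))) at_top"
  shows "(\<Sum>i\<in>I. pf_coeff I d i * (d i + K)) = - real (card S)"
    and "(\<Sum>i\<in>I. pf_coeff I d i * (d i + K) * d i) = - 2 * (\<Sum>v\<in>S. c v)"
proof -
  define P where "P = (\<lambda>z. \<Prod>v\<in>S. 1 - 1/(z - c v)^2)"
  define n where "n = real (card S)"
  define \<rho> where "\<rho> = (\<lambda>i. pf_coeff I d i * (d i + K))"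
  define R where "R = (\<lambda>z. \<Sum>i\<in>I. \<rho> i / (z - d i))"
  define A where "A = (\<Sum>i\<in>I. pf_coeff I d i)"
  have P2: "((\<lambda>z. z^2 * (1 - P z)) \<longlongrightarrow> n) at_top"
    and P3: "((\<lambda>z. z^3 * (1 - P z) - n * z) \<longlongrightarrow> 2 * (\<Sum>v\<in>S. c v)) at_top"
    using box_product_expansion[OF S, of c] unfolding P_def n_def by auto
  note R = simple_fractions_expansion[OF I, of \<rho> d]
  have expansion: "eventually (\<lambda>z. z * (1 - P z) = - (K + A) - R z) at_top"
    using eq eventually_not_in_finite[OF finite_imageI[OF I, of d]]
    by eventually_elim
       (simp add: P_def R_def A_def \<rho>_def shifted_partial_fractions[OF I inj] right_diff_distrib)
  (* the constant term of the expansion must vanish, *)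
  have "((\<lambda>z. z * (1 - P z)) \<longlongrightarrow> 0) at_top"
  proof (rule tendsto_zero_if_times_converges)
    have "(\<lambda>z. z * (z * (1 - P z))) = (\<lambda>z. z^2 * (1 - P z))"
      by (simp add: fun_eq_iff power2_eq_square)
    then show "((\<lambda>z. z * (z * (1 - P z))) \<longlongrightarrow> n) at_top" using P2 by simp
  qed
  moreover have "((\<lambda>z. z * (1 - P z)) \<longlongrightarrow> - (K + A) - 0) at_top"
    unfolding tendsto_cong[OF expansion] using tendsto_diff[OF tendsto_const R(1)] by (simp add: R_def)
  ultimately have KA: "K + A = 0" using tendsto_unique[OF trivial_limit_at_top_linorder] by force
  (* so the coefficients of 1/z and 1/z^2 of the two expansions can be compared *)
  have second: "eventually (\<lambda>z. z^2 * (1 - P z) = - (z * R z)) at_top"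
    using expansion by eventually_elim (simp add: KA power2_eq_square mult.assoc)
  have "((\<lambda>z. z^2 * (1 - P z)) \<longlongrightarrow> - (\<Sum>i\<in>I. \<rho> i)) at_top"
    unfolding tendsto_cong[OF second] using tendsto_minus[OF R(2)] by (simp add: R_def)
  then have sum1: "(\<Sum>i\<in>I. \<rho> i) = - n" using tendsto_unique[OF trivial_limit_at_top_linorder _ P2] by force
  have third: "eventually (\<lambda>z. z^3 * (1 - P z) - n * z = - (z * (z * R z - (\<Sum>i\<in>I. \<rho> i)))) at_top"
    using second
  proof eventually_elim
    case (elim z)
    have "z^3 * (1 - P z) = z * (z^2 * (1 - P z))" by (simp add: power2_eq_square power3_eq_cube)
    then show ?case unfolding elim sum1 by (simp add: algebra_simps)
  qed
  have "((\<lambda>z. z^3 * (1 - P z) - n * z) \<longlongrightarrow> - (\<Sum>i\<in>I. \<rho> i * d i)) at_top"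
    unfolding tendsto_cong[OF third] using tendsto_minus[OF R(3)] by (simp add: R_def)
  then have sum2: "(\<Sum>i\<in>I. \<rho> i * d i) = - 2 * (\<Sum>v\<in>S. c v)"
    using tendsto_unique[OF trivial_limit_at_top_linorder _ P3] by force
  show "(\<Sum>i\<in>I. pf_coeff I d i * (d i + K)) = - real (card S)"
    using sum1 unfolding \<rho>_def n_def .
  show "(\<Sum>i\<in>I. pf_coeff I d i * (d i + K) * d i) = - 2 * (\<Sum>v\<in>S. c v)"
    using sum2 unfolding \<rho>_def .
qed

section \<open>Rows, columns and hooks of a Young diagram\<close>

definition row_len :: "(nat \<times> nat) set \<Rightarrow> nat \<Rightarrow> nat" where
  "row_len Y x = card {y. (x,y) \<in> Y}"

definition col_len :: "(nat \<times> nat) set \<Rightarrow> nat \<Rightarrow> nat" where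
  "col_len Y y = card {x. (x,y) \<in> Y}"

lemma yd_finite: "young_diagram Y \<Longrightarrow> finite Y"
  unfolding young_diagram_def by simp

lemma yd_positive: "young_diagram Y \<Longrightarrow> (x,y) \<in> Y \<Longrightarrow> 1 \<le> x \<and> 1 \<le> y"
  unfolding young_diagram_def by blast

lemma yd_down_closed:
  "young_diagram Y \<Longrightarrow> (x,y) \<in> Y \<Longrightarrow> 1 \<le> x' \<Longrightarrow> x' \<le> x \<Longrightarrow> 1 \<le> y' \<Longrightarrow> y' \<le> y \<Longrightarrow> (x',y') \<in> Y"
  unfolding young_diagram_def by blast

lemma down_closed_interval:
  fixes A :: "nat set"
  assumes "finite A" and pos: "\<And>a. a \<in> A \<Longrightarrow> 1 \<le> a"
    and down: "\<And>a b. a \<in> A \<Longrightarrow> 1 \<le> b \<Longrightarrow> b \<le> a \<Longrightarrow> b \<in> A"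
  shows "A = {1..card A}"
proof (cases "A = {}")
  case False
  have "Max A \<in> A" using assms(1) False by simp
  then have "{1..Max A} \<subseteq> A" using down by auto
  moreover have "A \<subseteq> {1..Max A}" using pos assms(1) by auto
  ultimately show ?thesis by (metis card_atLeastAtMost diff_Suc_1 subset_antisym)
qed simp

lemma mem_row_len:
  assumes Y: "young_diagram Y"
  shows "(x,y) \<in> Y \<longleftrightarrow> 1 \<le> x \<and> 1 \<le> y \<and> y \<le> row_len Y x"
proof -
  have "{y. (x,y) \<in> Y} = {1..row_len Y x}"
    unfolding row_len_def
  proof (rule down_closed_interval)
    show "finite {y. (x,y) \<in> Y}"
      using finite_subset[of "{y. (x,y) \<in> Y}" "snd ` Y"] yd_finite[OF Y] by force
    show "1 \<le> a" if "a \<in> {y. (x,y) \<in> Y}" for a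
      using that yd_positive[OF Y] by blast
    show "b \<in> {y. (x,y) \<in> Y}" if "a \<in> {y. (x,y) \<in> Y}" "1 \<le> b" "b \<le> a" for a b
      using that yd_down_closed[OF Y, of x a x b] yd_positive[OF Y] by auto
  qed
  then have "y \<in> {y. (x,y) \<in> Y} \<longleftrightarrow> y \<in> {1..row_len Y x}" by (rule arg_cong)
  then show ?thesis using yd_positive[OF Y, of x y] by auto
qed

lemma mem_col_len:
  assumes Y: "young_diagram Y"
  shows "(x,y) \<in> Y \<longleftrightarrow> 1 \<le> x \<and> 1 \<le> y \<and> x \<le> col_len Y y"
proof -
  have "{x. (x,y) \<in> Y} = {1..col_len Y y}"
    unfolding col_len_def
  proof (rule down_closed_interval)
    show "finite {x. (x,y) \<in> Y}"
      using finite_subset[of "{x. (x,y) \<in> Y}" "fst ` Y"] yd_finite[OF Y] by force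
    show "1 \<le> a" if "a \<in> {x. (x,y) \<in> Y}" for a
      using that yd_positive[OF Y] by blast
    show "b \<in> {x. (x,y) \<in> Y}" if "a \<in> {x. (x,y) \<in> Y}" "1 \<le> b" "b \<le> a" for a b
      using that yd_down_closed[OF Y, of a y b y] yd_positive[OF Y] by auto
  qed
  then have "x \<in> {x. (x,y) \<in> Y} \<longleftrightarrow> x \<in> {1..col_len Y y}" by (rule arg_cong)
  then show ?thesis using yd_positive[OF Y, of x y] by auto
qed

lemma row_len_antimono:
  assumes Y: "young_diagram Y" and "1 \<le> a" "a \<le> b"
  shows "row_len Y b \<le> row_len Y a"
  using mem_row_len[OF Y, of b "row_len Y b"] mem_row_len[OF Y, of a "row_len Y b"]
    yd_down_closed[OF Y, of b "row_len Y b" a "row_len Y b"] assms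
  by (cases "row_len Y b = 0") auto

lemma row_len_le_card:
  assumes Y: "young_diagram Y"
  shows "row_len Y x \<le> card Y"
  unfolding row_len_def
  by (rule card_inj_on_le[of "\<lambda>y. (x,y)"]) (auto simp: inj_on_def yd_finite[OF Y])

lemma row_len_beyond:
  assumes Y: "young_diagram Y" and "card Y < x"
  shows "row_len Y x = 0"
proof (rule ccontr)
  assume "row_len Y x \<noteq> 0"
  then have "(x,1) \<in> Y" using mem_row_len[OF Y] assms by simp
  then have "(\<lambda>k. (k,1)) ` {1..x} \<subseteq> Y" using yd_down_closed[OF Y] by auto
  then have "card ((\<lambda>k. (k,1::nat)) ` {1..x}) \<le> card Y"
    by (rule card_mono[OF yd_finite[OF Y]])
  moreover have "card ((\<lambda>k. (k,1::nat)) ` {1..x}) = x"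
    by (subst card_image) (auto simp: inj_on_def)
  ultimately show False using assms by simp
qed

lemma yd_as_rows:
  assumes Y: "young_diagram Y" and N: "card Y \<le> N"
  shows "Y = Sigma {1..N} (\<lambda>x. {1..row_len Y x})"
proof -
  have "x \<le> N" if "(x,y) \<in> Y" for x y
    using that row_len_beyond[OF Y, of x] N mem_row_len[OF Y] by (cases "x \<le> N") auto
  then show ?thesis using mem_row_len[OF Y] by auto
qed

lemma hook_lengths:
  assumes Y: "young_diagram Y" and xy: "(x,y) \<in> Y"
  shows "hook Y (x,y) = (col_len Y y + 1 - x) + (row_len Y x - y)"
proof -
  have col: "{v \<in> Y. snd v = snd (x,y) \<and> fst v \<ge> fst (x,y)} = (\<lambda>a. (a,y)) ` {x..col_len Y y}"
    using mem_col_len[OF Y] xy by (auto simp: image_iff)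
  have row: "{v \<in> Y. fst v = fst (x,y) \<and> snd v > snd (x,y)} = (\<lambda>b. (x,b)) ` {y<..row_len Y x}"
    using mem_row_len[OF Y] xy by (auto simp: image_iff)
  show ?thesis unfolding hook_def col row by (simp add: card_image inj_on_def)
qed

lemma hook_pos:
  assumes Y: "young_diagram Y" and xy: "(x,y) \<in> Y"
  shows "hook Y (x,y) \<ge> 1"
  using hook_lengths[OF assms] mem_col_len[OF Y] xy by arith

lemma hook_prod_pos: "young_diagram Y \<Longrightarrow> real (hook_prod Y) > 0"
  unfolding hook_prod_def of_nat_prod
  by (rule prod_pos) (use hook_pos in fastforce)

lemma corner_lengths:
  assumes Y: "young_diagram Y" and u: "(i,m) \<in> corners Y"
  shows "row_len Y i = m" "col_len Y m = i" "row_len Y (Suc i) < m"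
    and "1 \<le> i" "1 \<le> m" "i \<le> card Y"
proof -
  have uY: "(i,m) \<in> Y" and n1: "(i+1,m) \<notin> Y" and n2: "(i,m+1) \<notin> Y"
    using u unfolding corners_def by auto
  show "1 \<le> i" "1 \<le> m" using yd_positive[OF Y uY] by auto
  show m: "row_len Y i = m" using uY n2 mem_row_len[OF Y] by auto
  show "col_len Y m = i" using uY n1 mem_col_len[OF Y] by auto
  show "row_len Y (Suc i) < m" using uY n1 mem_row_len[OF Y, of "i+1" m] yd_positive[OF Y uY] by auto
  show "i \<le> card Y" using m row_len_beyond[OF Y, of i] uY mem_row_len[OF Y] by (cases "i \<le> card Y") auto
qed

lemma corners_by_rows:
  assumes Y: "young_diagram Y" and N: "card Y \<le> N"
  shows "corners Y = (\<lambda>i. (i, row_len Y i)) ` {i\<in>{1..N}. row_len Y (Suc i) < row_len Y i}"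
proof
  show "corners Y \<subseteq> (\<lambda>i. (i, row_len Y i)) ` {i\<in>{1..N}. row_len Y (Suc i) < row_len Y i}"
  proof
    fix u assume u: "u \<in> corners Y"
    obtain i m where im: "u = (i,m)" by force
    show "u \<in> (\<lambda>i. (i, row_len Y i)) ` {i\<in>{1..N}. row_len Y (Suc i) < row_len Y i}"
      using corner_lengths[OF Y u[unfolded im]] N im by auto
  qed
  show "(\<lambda>i. (i, row_len Y i)) ` {i\<in>{1..N}. row_len Y (Suc i) < row_len Y i} \<subseteq> corners Y"
    using mem_row_len[OF Y] unfolding corners_def by auto
qed

section \<open>The hook quotient at a corner\<close>

lemma hook_remove:
  assumes fin: "finite Y" and u: "u \<in> Y" and v: "v \<in> Y" "v \<noteq> u"
  shows "hook (Y - {u}) v = hook Y v - (if snd v = snd u \<and> fst v < fst u then 1 else 0)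
                                     - (if fst v = fst u \<and> snd v < snd u then 1 else 0)"
proof -
  define C where "C = {w \<in> Y. snd w = snd v \<and> fst w \<ge> fst v}"
  define R where "R = {w \<in> Y. fst w = fst v \<and> snd w > snd v}"
  have C': "{w \<in> Y - {u}. snd w = snd v \<and> fst w \<ge> fst v} = C - {u}"
    and R': "{w \<in> Y - {u}. fst w = fst v \<and> snd w > snd v} = R - {u}"
    unfolding C_def R_def by auto
  have fin': "finite C" "finite R" unfolding C_def R_def using fin by simp_all
  have uC: "u \<in> C \<longleftrightarrow> snd v = snd u \<and> fst v < fst u"
    and uR: "u \<in> R \<longleftrightarrow> fst v = fst u \<and> snd v < snd u"
    unfolding C_def R_def using u v by (cases u, cases v, auto)+
  have "v \<in> C" unfolding C_def using v by simp
  then have "card C \<ge> 1" using fin'(1) card_gt_0_iff by (metis One_nat_def Suc_leI empty_iff)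
  moreover have "u \<in> R \<Longrightarrow> card R \<ge> 1" using fin'(2) card_gt_0_iff by (metis One_nat_def Suc_leI empty_iff)
  ultimately show ?thesis
    unfolding hook_def C' R' C_def[symmetric] R_def[symmetric]
    using card_Diff_singleton_if[of C u] card_Diff_singleton_if[of R u] uC uR
    by (auto split: if_splits)
qed

definition hook_quot :: "(nat \<times> nat) set \<Rightarrow> nat \<times> nat \<Rightarrow> nat \<times> nat \<Rightarrow> real" where
  "hook_quot Y u v = real (hook Y v) / real (hook (Y - {u}) v)"

(* Removing a corner u changes only the hooks of the boxes above it in its column and
  left of it in its row, and its own hook is 1; so H_Y / H_{Y-u} is a product over these. *)
lemma hook_ratio_col_row:
  assumes Y: "young_diagram Y" and u: "(i,m) \<in> corners Y"
  shows "real (hook_prod Y) / real (hook_prod (Y - {(i,m)})) =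
         (\<Prod>k\<in>{1..<i}. hook_quot Y (i,m) (k,m)) * (\<Prod>j\<in>{1..<m}. hook_quot Y (i,m) (i,j))"
proof -
  let ?q = "hook_quot Y (i,m)"
  have fin: "finite Y" using Y by (rule yd_finite)
  have uY: "(i,m) \<in> Y" using u unfolding corners_def by auto
  note len = corner_lengths[OF Y u]
  have "hook Y (i,m) = 1" using hook_lengths[OF Y uY] len by simp
  then have HY: "hook_prod Y = (\<Prod>v\<in>Y-{(i,m)}. hook Y v)"
    unfolding hook_prod_def using prod.remove[OF fin uY, of "hook Y"] by simp
  have ratio: "real (hook_prod Y) / real (hook_prod (Y - {(i,m)})) = (\<Prod>v\<in>Y-{(i,m)}. ?q v)"
    unfolding hook_quot_def HY by (simp add: prod_dividef hook_prod_def)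
  define Col where "Col = (\<lambda>k. (k,m)) ` {1..<i}"
  define Row where "Row = (\<lambda>j. (i,j)) ` {1..<m}"
  have sub: "Col \<subseteq> Y - {(i,m)}" "Row \<subseteq> Y - {(i,m)}"
    unfolding Col_def Row_def using yd_down_closed[OF Y uY] len by auto
  have rest: "?q v = 1" if "v \<in> (Y - {(i,m)}) - (Col \<union> Row)" for v
  proof -
    obtain a b where v: "v = (a,b)" by force
    have vY: "(a,b) \<in> Y" "(a,b) \<noteq> (i,m)" using that v by auto
    have "\<not> (b = m \<and> a < i)" "\<not> (a = i \<and> b < m)"
      using that v yd_positive[OF Y vY(1)] unfolding Col_def Row_def by auto
    then have "hook (Y - {(i,m)}) (a,b) = hook Y (a,b)"
      using hook_remove[OF fin uY vY] by auto
    then show ?thesis unfolding hook_quot_def v using hook_pos[OF Y vY(1)] by simp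
  qed
  have "(\<Prod>v\<in>Y-{(i,m)}. ?q v) = (\<Prod>v\<in>Col \<union> Row. ?q v)"
    by (rule prod.mono_neutral_right) (use fin sub rest in auto)
  also have "\<dots> = (\<Prod>v\<in>Col. ?q v) * (\<Prod>v\<in>Row. ?q v)"
    by (rule prod.union_disjoint) (auto simp: Col_def Row_def)
  also have "(\<Prod>v\<in>Col. ?q v) = (\<Prod>k\<in>{1..<i}. ?q (k,m))"
    unfolding Col_def by (subst prod.reindex) (auto simp: inj_on_def)
  also have "(\<Prod>v\<in>Row. ?q v) = (\<Prod>j\<in>{1..<m}. ?q (i,j))"
    unfolding Row_def by (subst prod.reindex) (auto simp: inj_on_def)
  finally show ?thesis using ratio by simp
qed

definition row_end_content :: "(nat \<times> nat) set \<Rightarrow> nat \<Rightarrow> real" where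
  "row_end_content Y k = real (row_len Y k) - real k"

lemma row_end_content_inj:
  assumes Y: "young_diagram Y"
  shows "inj_on (row_end_content Y) {1..N}"
proof -
  have "row_end_content Y b < row_end_content Y a" if "a \<in> {1..N}" "a < b" for a b
    using row_len_antimono[OF Y, of a b] that unfolding row_end_content_def by auto
  then show ?thesis unfolding inj_on_def by (metis less_irrefl linorder_neqE_nat atLeastAtMost_iff)
qed

lemma hook_quot_col:
  assumes Y: "young_diagram Y" and u: "(i,m) \<in> corners Y" and k: "k \<in> {1..<i}"
  shows "hook_quot Y (i,m) (k,m) = 1 - 1/(row_end_content Y i - row_end_content Y k)"
proof -
  note len = corner_lengths[OF Y u]
  have uY: "(i,m) \<in> Y" using u unfolding corners_def by auto
  have kY: "(k,m) \<in> Y" using yd_down_closed[OF Y uY] k len by auto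
  have rk: "m \<le> row_len Y k" using kY mem_row_len[OF Y] by auto
  have h1: "hook Y (k,m) = i + 1 - k + (row_len Y k - m)" using hook_lengths[OF Y kY] len by simp
  have h2: "hook (Y - {(i,m)}) (k,m) = hook Y (k,m) - 1"
    using hook_remove[OF yd_finite[OF Y] uY kY] k by auto
  define D where "D = real (row_len Y k) - real m + real i - real k"
  have "D \<ge> 1" unfolding D_def using k rk by auto
  moreover have "real (hook Y (k,m)) = D + 1" "real (hook (Y - {(i,m)}) (k,m)) = D"
    using h1 h2 k rk unfolding D_def by (simp_all add: of_nat_diff)
  moreover have "row_end_content Y i - row_end_content Y k = - D"
    unfolding row_end_content_def D_def len(1) by simp
  ultimately show ?thesis unfolding hook_quot_def by (simp add: field_simps)
qed

lemma col_len_in_row: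
  assumes Y: "young_diagram Y" and N: "card Y \<le> N"
    and u: "(i,m) \<in> corners Y" and j: "j \<in> {1..<m}"
  shows "col_len Y j = i + card {k\<in>{i<..N}. j \<le> row_len Y k}"
proof -
  have uY: "(i,m) \<in> Y" using u unfolding corners_def by auto
  have "{x. (x,j) \<in> Y} = {1..i} \<union> {k\<in>{i<..N}. j \<le> row_len Y k}"
  proof (intro set_eqI iffI)
    fix x assume x: "x \<in> {x. (x,j) \<in> Y}"
    then have "x \<le> N" using yd_as_rows[OF Y N] by (metis SigmaD1 atLeastAtMost_iff mem_Collect_eq)
    then show "x \<in> {1..i} \<union> {k\<in>{i<..N}. j \<le> row_len Y k}" using x mem_row_len[OF Y] by auto
  next
    fix x assume x: "x \<in> {1..i} \<union> {k\<in>{i<..N}. j \<le> row_len Y k}"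
    then show "x \<in> {x. (x,j) \<in> Y}"
      using yd_down_closed[OF Y uY, of x j] j mem_row_len[OF Y, of x j] by (cases "x \<le> i") auto
  qed
  then have "col_len Y j = card ({1..i} \<union> {k\<in>{i<..N}. j \<le> row_len Y k})" unfolding col_len_def by simp
  also have "\<dots> = i + card {k\<in>{i<..N}. j \<le> row_len Y k}"
    by (subst card_Un_disjoint) auto
  finally show ?thesis .
qed

(* The quotient h/(h - 1) for the hook h = m - j + 1 + #{k \<in> (i,N]. j \<le> \<mu> k} of the box
  (i,j) in a row of length m, when the rows k below row i have lengths \<mu> k. *)
definition row_quot :: "nat \<Rightarrow> (nat \<Rightarrow> nat) \<Rightarrow> nat \<Rightarrow> nat \<Rightarrow> nat \<Rightarrow> real" where
  "row_quot m \<mu> i N j = (real m - real j + 1 + real (card {k\<in>{i<..N}. j \<le> \<mu> k}))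
                      / (real m - real j + real (card {k\<in>{i<..N}. j \<le> \<mu> k}))"

lemma hook_quot_row:
  assumes Y: "young_diagram Y" and N: "card Y \<le> N"
    and u: "(i,m) \<in> corners Y" and j: "j \<in> {1..<m}"
  shows "hook_quot Y (i,m) (i,j) = row_quot m (row_len Y) i N j"
proof -
  note len = corner_lengths[OF Y u]
  have uY: "(i,m) \<in> Y" using u unfolding corners_def by auto
  have jY: "(i,j) \<in> Y" using yd_down_closed[OF Y uY] j len by auto
  have h1: "hook Y (i,j) = col_len Y j + 1 - i + (m - j)" using hook_lengths[OF Y jY] len by simp
  have h2: "hook (Y - {(i,m)}) (i,j) = hook Y (i,j) - 1"
    using hook_remove[OF yd_finite[OF Y] uY jY] j by auto
  show ?thesis unfolding hook_quot_def row_quot_def h2 h1 col_len_in_row[OF Y N u j] using j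
    by (simp add: of_nat_diff algebra_simps)
qed

lemma telescope:
  fixes a :: real
  assumes "s \<le> N" "a + real s > 0"
  shows "(\<Prod>k\<in>{s<..N}. (a + real k - 1)/(a + real k)) = (a + real s)/(a + real N)"
  using assms
proof (induction N)
  case (Suc N)
  show ?case
  proof (cases "s = Suc N")
    case False
    then have sN: "s \<le> N" using Suc.prems by simp
    have "{s<..Suc N} = insert (Suc N) {s<..N}" using sN by auto
    then have "(\<Prod>k\<in>{s<..Suc N}. (a + real k - 1)/(a + real k)) =
        (a + real N)/(a + real (Suc N)) * ((a + real s)/(a + real N))"
      using Suc.IH[OF sN Suc.prems(2)] by simp
    also have "\<dots> = (a + real s)/(a + real (Suc N))"
      using sN Suc.prems(2) by simp
    finally show ?thesis .
  qed (use Suc.prems in simp)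
qed simp

(* The factor (b + k - \<mu> k - 1)/(b + k - \<mu> k) contributed by a lower row k of length
  \<mu> k to the product of the row factors (lemma row_quot_product). *)
definition row_factor :: "real \<Rightarrow> (nat \<Rightarrow> nat) \<Rightarrow> nat \<Rightarrow> real" where
  "row_factor b \<mu> k = (b + real k - real (\<mu> k) - 1) / (b + real k - real (\<mu> k))"

lemma row_factor_tail:
  assumes "i \<le> s" "s \<le> N" and zero: "\<And>k. s < k \<Longrightarrow> k \<le> N \<Longrightarrow> \<mu> k = 0" and pos: "b + real s > 0"
  shows "(b + real N) * (\<Prod>k\<in>{i<..N}. row_factor b \<mu> k) = (b + real s) * (\<Prod>k\<in>{i<..s}. row_factor b \<mu> k)"
proof -
  have "(\<Prod>k\<in>{s<..N}. row_factor b \<mu> k) = (\<Prod>k\<in>{s<..N}. (b + real k - 1)/(b + real k))"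
    by (rule prod.cong) (auto simp: row_factor_def zero)
  also have "\<dots> = (b + real s)/(b + real N)"
    by (rule telescope) (use assms in auto)
  finally have tail: "(\<Prod>k\<in>{s<..N}. row_factor b \<mu> k) = (b + real s)/(b + real N)" .
  have "{i<..N} = {i<..s} \<union> {s<..N}" using assms by auto
  then have "(\<Prod>k\<in>{i<..N}. row_factor b \<mu> k) = (\<Prod>k\<in>{i<..s}. row_factor b \<mu> k) * (\<Prod>k\<in>{s<..N}. row_factor b \<mu> k)"
    by (simp add: prod.union_disjoint)
  moreover have "b + real N > 0" using assms by simp
  ultimately show ?thesis unfolding tail by simp
qed

lemma antitone_prefix:
  fixes \<mu> :: "nat \<Rightarrow> nat"
  assumes anti: "\<And>a c. i < a \<Longrightarrow> a \<le> c \<Longrightarrow> c \<le> N \<Longrightarrow> \<mu> c \<le> \<mu> a" and iN: "i \<le> N"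
  obtains s where "i \<le> s" "s \<le> N" "{k\<in>{i<..N}. 1 \<le> \<mu> k} = {i<..s}"
proof -
  define A where "A = {k\<in>{i<..N}. 1 \<le> \<mu> k}"
  define s where "s = Max (insert i A)"
  have finA: "finite A" unfolding A_def by simp
  have iS: "i \<le> s" and sN: "s \<le> N" unfolding s_def using finA iN by (auto simp: A_def)
  have "A = {i<..s}"
  proof
    show "A \<subseteq> {i<..s}" using finA by (auto simp: A_def s_def)
    show "{i<..s} \<subseteq> A"
    proof
      fix k assume k: "k \<in> {i<..s}"
      then have "s \<in> A" using finA Max_in[of "insert i A"] unfolding s_def by auto
      then show "k \<in> A" using k sN anti[of k s] unfolding A_def by auto
    qed
  qed
  then show ?thesis using that iS sN unfolding A_def by blast
qed

(* Removing the first column: the quotients of the boxes (i,2), ..., (i,m) in a row of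
  length m + 1 are those of a row of length m with every lower row shortened by one. *)
lemma row_quot_first_column:
  assumes m: "1 \<le> m" and iS: "i \<le> s" and pre: "{k\<in>{i<..N}. 1 \<le> \<mu> k} = {i<..s}"
  shows "(\<Prod>j\<in>{1..<Suc m}. row_quot (Suc m) \<mu> i N j)
       = (real (Suc m) - real i + real s) / (real m - real i + real s)
         * (\<Prod>j\<in>{1..<m}. row_quot m (\<lambda>k. \<mu> k - 1) i N j)"
proof -
  have first: "row_quot (Suc m) \<mu> i N 1 = (real (Suc m) - real i + real s) / (real m - real i + real s)"
    unfolding row_quot_def pre using iS by (simp add: algebra_simps)
  have shift: "row_quot (Suc m) \<mu> i N (Suc j) = row_quot m (\<lambda>k. \<mu> k - 1) i N j" if "1 \<le> j" for j
  proof -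
    have "{k\<in>{i<..N}. Suc j \<le> \<mu> k} = {k\<in>{i<..N}. j \<le> \<mu> k - 1}" using that by auto
    then show ?thesis unfolding row_quot_def by simp
  qed
  have "(\<Prod>j\<in>{1..<Suc m}. row_quot (Suc m) \<mu> i N j)
      = row_quot (Suc m) \<mu> i N 1 * (\<Prod>j\<in>{Suc 1..<Suc m}. row_quot (Suc m) \<mu> i N j)"
    by (rule prod.atLeast_Suc_lessThan) (use m in simp)
  also have "(\<Prod>j\<in>{Suc 1..<Suc m}. row_quot (Suc m) \<mu> i N j) = (\<Prod>j\<in>{1..<m}. row_quot (Suc m) \<mu> i N (Suc j))"
    by (rule prod.shift_bounds_Suc_ivl)
  also have "\<dots> = (\<Prod>j\<in>{1..<m}. row_quot m (\<lambda>k. \<mu> k - 1) i N j)"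
    by (rule prod.cong) (simp_all add: shift)
  finally show ?thesis unfolding first .
qed

lemma row_factor_first_column:
  assumes "1 \<le> \<mu> k"
  shows "row_factor b (\<lambda>k. \<mu> k - 1) k = row_factor (b + 1) \<mu> k"
proof -
  have "b + real k - real (\<mu> k - 1) = (b + 1) + real k - real (\<mu> k)"
    using assms by (simp add: of_nat_diff)
  then show ?thesis unfolding row_factor_def by (simp only:)
qed

lemma row_quot_product:
  fixes \<mu> :: "nat \<Rightarrow> nat"
  assumes m: "1 \<le> m" and anti: "\<And>a c. i < a \<Longrightarrow> a \<le> c \<Longrightarrow> c \<le> N \<Longrightarrow> \<mu> c \<le> \<mu> a"
    and short: "\<And>k. i < k \<Longrightarrow> k \<le> N \<Longrightarrow> \<mu> k < m" and iN: "i \<le> N"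
  shows "(\<Prod>j\<in>{1..<m}. row_quot m \<mu> i N j)
       = (real m - real i + real N) * (\<Prod>k\<in>{i<..N}. row_factor (real m - real i) \<mu> k)"
  using m anti short
proof (induction m arbitrary: \<mu> rule: nat_induct_at_least)
  case base
  have "(1 - real i + real N) * (\<Prod>k\<in>{i<..N}. row_factor (1 - real i) \<mu> k)
      = (1 - real i + real i) * (\<Prod>k\<in>{i<..i}. row_factor (1 - real i) \<mu> k)"
    by (rule row_factor_tail) (use base.prems(2) iN in auto)
  then show ?case by simp
next
  case (Suc m)
  let ?\<mu>' = "\<lambda>k. \<mu> k - 1" and ?b = "real m - real i"
  obtain s where iS: "i \<le> s" and sN: "s \<le> N" and pre: "{k\<in>{i<..N}. 1 \<le> \<mu> k} = {i<..s}"
    using antitone_prefix[of i N \<mu>, OF Suc.prems(1) iN] by blast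
  have zero: "\<mu> k = 0" if "s < k" "k \<le> N" for k
  proof -
    have "k \<notin> {k\<in>{i<..N}. 1 \<le> \<mu> k}" unfolding pre using that by simp
    then show ?thesis using that iS by simp
  qed
  have first_column: "row_factor ?b ?\<mu>' k = row_factor (?b + 1) \<mu> k" if "k \<in> {i<..s}" for k
  proof -
    have "k \<in> {k\<in>{i<..N}. 1 \<le> \<mu> k}" unfolding pre using that .
    then have "1 \<le> \<mu> k" by simp
    then show ?thesis by (rule row_factor_first_column)
  qed
  have IH: "(\<Prod>j\<in>{1..<m}. row_quot m ?\<mu>' i N j)
       = (?b + real N) * (\<Prod>k\<in>{i<..N}. row_factor ?b ?\<mu>' k)"
  proof (rule Suc.IH)
    show "?\<mu>' c \<le> ?\<mu>' a" if "i < a" "a \<le> c" "c \<le> N" for a c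
      using Suc.prems(1)[OF that] by (rule diff_le_mono)
    show "?\<mu>' k < m" if "i < k" "k \<le> N" for k
      using Suc.prems(2)[OF that] Suc.hyps by linarith
  qed
  have shifted: "(\<Prod>k\<in>{i<..s}. row_factor ?b ?\<mu>' k) = (\<Prod>k\<in>{i<..s}. row_factor (?b + 1) \<mu> k)"
    by (rule prod.cong[OF refl first_column])
  have pos: "?b + real s > 0" using iS Suc.hyps by simp
  have b: "real (Suc m) - real i = ?b + 1" by simp
  have "(\<Prod>j\<in>{1..<Suc m}. row_quot (Suc m) \<mu> i N j)
      = (?b + 1 + real s) / (?b + real s) * ((?b + real N) * (\<Prod>k\<in>{i<..N}. row_factor ?b ?\<mu>' k))"
    unfolding row_quot_first_column[OF Suc.hyps iS pre] IH b by (simp only:)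
  also have "\<dots> = (?b + 1 + real s) / (?b + real s) * ((?b + real s) * (\<Prod>k\<in>{i<..s}. row_factor ?b ?\<mu>' k))"
    by (subst row_factor_tail[OF iS sN _ pos]) (simp_all add: zero)
  also have "\<dots> = (?b + 1 + real s) * (\<Prod>k\<in>{i<..s}. row_factor (?b + 1) \<mu> k)"
    unfolding shifted using pos by simp
  also have "\<dots> = (?b + 1 + real N) * (\<Prod>k\<in>{i<..N}. row_factor (?b + 1) \<mu> k)"
    by (rule row_factor_tail[symmetric]) (use iS sN zero pos in auto)
  finally show ?case unfolding b .
qed

lemma hook_ratio_at_corner:
  assumes Y: "young_diagram Y" and N: "card Y \<le> N" and u: "(i,m) \<in> corners Y"
  shows "real (hook_prod Y) / real (hook_prod (Y - {(i,m)}))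
       = (row_end_content Y i + real N) *
         (\<Prod>k\<in>{1..N}-{i}. 1 - 1/(row_end_content Y i - row_end_content Y k))"
proof -
  let ?d = "row_end_content Y"
  note len = corner_lengths[OF Y u]
  have short: "row_len Y k < m" if "i < k" for k
    using row_len_antimono[OF Y, of "Suc i" k] that len(3) by simp
  have row: "(\<Prod>j\<in>{1..<m}. hook_quot Y (i,m) (i,j)) =
      (real m - real i + real N) * (\<Prod>k\<in>{i<..N}. row_factor (real m - real i) (row_len Y) k)"
    using row_quot_product[of m i N "row_len Y"] hook_quot_row[OF Y N u] row_len_antimono[OF Y] short len N
    by simp
  have factor: "row_factor (real m - real i) (row_len Y) k = 1 - 1/(?d i - ?d k)" if "i < k" for k
  proof -
    have "?d i - ?d k = real m + real k - real i - real (row_len Y k)"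
      unfolding row_end_content_def len(1) by simp
    moreover have "real m + real k - real i - real (row_len Y k) > 0" using short[OF that] that by simp
    ultimately show ?thesis unfolding row_factor_def by (simp add: field_simps)
  qed
  have rows: "{1..N} - {i} = {1..<i} \<union> {i<..N}" using len N by auto
  have "(\<Prod>k\<in>{1..N}-{i}. 1 - 1/(?d i - ?d k)) =
      (\<Prod>k\<in>{1..<i}. 1 - 1/(?d i - ?d k)) * (\<Prod>k\<in>{i<..N}. 1 - 1/(?d i - ?d k))"
    unfolding rows by (rule prod.union_disjoint) auto
  moreover have "?d i + real N = real m - real i + real N" unfolding row_end_content_def len(1) by simp
  ultimately show ?thesis
    unfolding hook_ratio_col_row[OF Y u] row
    by (simp add: hook_quot_col[OF Y u] factor)
qed

section \<open>The content product of a Young diagram\<close>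

lemma row_telescope:
  fixes w :: real
  assumes "w > real r + 1"
  shows "(\<Prod>j\<in>{1..r}. 1 - 1/(w - real j)^2) = (w - real r - 1) * w / ((w - 1) * (w - real r))"
  using assms
proof (induction r)
  case (Suc r)
  define a where "a = w - real r - 1"
  have a: "a > 0" "a + 1 \<noteq> 0" "w - 1 \<noteq> 0" using Suc.prems unfolding a_def by auto
  have e: "w - real r = a + 1" "w - real (Suc r) = a" "w - real (Suc r) - 1 = a - 1"
    unfolding a_def by simp_all
  have "(\<Prod>j\<in>{1..Suc r}. 1 - 1/(w - real j)^2)
      = (\<Prod>j\<in>{1..r}. 1 - 1/(w - real j)^2) * (1 - 1/(w - real (Suc r))^2)"
    by simp
  also have "\<dots> = a * w / ((w - 1) * (a + 1)) * (1 - 1/a^2)"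
    using Suc unfolding e(1,2) a_def[symmetric] by simp
  also have "\<dots> = (a - 1) * w / ((w - 1) * a)"
  proof -
    have "1 - 1/a^2 = (a - 1) * (a + 1) / a^2" using a by (simp add: field_simps power2_eq_square)
    then show ?thesis using a by (simp add: power2_eq_square)
  qed
  finally show ?case unfolding e .
qed simp

lemma content_product_identity:
  assumes Y: "young_diagram Y"
  shows "eventually (\<lambda>z. z * (\<Prod>v\<in>Y. 1 - 1/(z - real_of_int (content v))^2)
           = (z + real (card Y)) * (\<Prod>k\<in>{1..card Y}. 1 - 1/(z - row_end_content Y k))) at_top"
  using eventually_gt_at_top[of "2 * real (card Y) + 2"]
proof eventually_elim
  case (elim z)
  let ?N = "card Y" and ?d = "row_end_content Y"
  have row: "(\<Prod>j\<in>{1..row_len Y i}. 1 - 1/(z - real_of_int (content (i,j)))^2)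
      = (1 - 1/(z - ?d i)) / ((z + real i - 1) / (z + real i))" for i
  proof -
    have r: "real (row_len Y i) \<le> real ?N" using row_len_le_card[OF Y] by simp
    have "(\<Prod>j\<in>{1..row_len Y i}. 1 - 1/(z - real_of_int (content (i,j)))^2)
        = (\<Prod>j\<in>{1..row_len Y i}. 1 - 1/((z + real i) - real j)^2)"
      by (rule prod.cong) (simp_all add: content_def algebra_simps)
    also have "\<dots> = ((z + real i) - real (row_len Y i) - 1) * (z + real i)
                    / (((z + real i) - 1) * ((z + real i) - real (row_len Y i)))"
      by (rule row_telescope) (use elim r in auto)
    also have "\<dots> = (1 - 1/(z - ?d i)) / ((z + real i - 1) / (z + real i))"
      using elim r by (simp add: row_end_content_def field_simps)
    finally show ?thesis .
  qed
  have "(\<Prod>v\<in>Y. 1 - 1/(z - real_of_int (content v))^2)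
      = (\<Prod>i\<in>{1..?N}. \<Prod>j\<in>{1..row_len Y i}. 1 - 1/(z - real_of_int (content (i,j)))^2)"
    by (subst yd_as_rows[OF Y order_refl]) (simp add: prod.Sigma)
  also have "\<dots> = (\<Prod>i\<in>{1..?N}. 1 - 1/(z - ?d i)) / (\<Prod>i\<in>{1..?N}. (z + real i - 1) / (z + real i))"
    unfolding row prod_dividef ..
  also have "(\<Prod>i\<in>{1..?N}. (z + real i - 1) / (z + real i)) = z / (z + real ?N)"
    using telescope[of 0 ?N z] elim by (simp add: atLeastSucAtMost_greaterThanAtMost[symmetric])
  finally show ?case using elim by (simp add: field_simps)
qed

section \<open>First identity: sums over the corners\<close>

(* The numerator of the simple fraction at d_i in the expansion of
  (z + N) \<Prod>_k (1 - 1/(z - d_k)), the row-end contents d taken over rows 1..N. *)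
definition row_weight :: "(nat \<times> nat) set \<Rightarrow> nat \<Rightarrow> real" where
  "row_weight Y i = pf_coeff {1..card Y} (row_end_content Y) i * (row_end_content Y i + real (card Y))"

(* Rows that do not end in a corner have weight zero: either the next row has the same
  length, making a factor of the product vanish, or i = N and the row is empty. *)
lemma row_weight_non_corner:
  assumes Y: "young_diagram Y" and i: "i \<in> {1..card Y}" and nc: "\<not> row_len Y (Suc i) < row_len Y i"
  shows "row_weight Y i = 0"
proof -
  let ?N = "card Y" and ?d = "row_end_content Y"
  have eq: "row_len Y (Suc i) = row_len Y i" using nc i row_len_antimono[OF Y, of i "Suc i"] by auto
  show ?thesis
  proof (cases "i = ?N")
    case True
    then have "row_len Y i = 0" using eq row_len_beyond[OF Y, of "Suc i"] by simp
    then have "?d i + real ?N = 0" using True unfolding row_end_content_def by simp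
    then show ?thesis unfolding row_weight_def by simp
  next
    case False
    then have "Suc i \<in> {1..?N} - {i}" using i by auto
    moreover have "1 - 1/(?d i - ?d (Suc i)) = 0" using eq unfolding row_end_content_def by simp
    ultimately have "(\<Prod>k\<in>{1..?N}-{i}. 1 - 1/(?d i - ?d k)) = 0" by (intro prod_zero) auto
    then show ?thesis unfolding row_weight_def pf_coeff_def by simp
  qed
qed

lemma hook_ratio_row_weight:
  assumes Y: "young_diagram Y" and u: "(i,m) \<in> corners Y"
  shows "real (hook_prod Y) / real (hook_prod (Y - {(i,m)})) = - row_weight Y i"
  using hook_ratio_at_corner[OF Y order_refl u]
  unfolding row_weight_def pf_coeff_def by simp

lemma corner_sum_as_row_sum:
  assumes Y: "young_diagram Y"
  shows "(\<Sum>u\<in>corners Y. f u * (real (hook_prod Y) / real (hook_prod (Y - {u}))))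
       = - (\<Sum>i\<in>{1..card Y}. f (i, row_len Y i) * row_weight Y i)"
proof -
  define CR where "CR = {i\<in>{1..card Y}. row_len Y (Suc i) < row_len Y i}"
  have corners: "corners Y = (\<lambda>i. (i, row_len Y i)) ` CR"
    unfolding CR_def using corners_by_rows[OF Y order_refl] .
  have "(\<Sum>u\<in>corners Y. f u * (real (hook_prod Y) / real (hook_prod (Y - {u}))))
      = (\<Sum>i\<in>CR. f (i, row_len Y i) * (real (hook_prod Y) / real (hook_prod (Y - {(i, row_len Y i)}))))"
    unfolding corners by (subst sum.reindex) (auto simp: inj_on_def)
  also have "\<dots> = (\<Sum>i\<in>CR. - (f (i, row_len Y i) * row_weight Y i))"
    by (rule sum.cong) (use corners hook_ratio_row_weight[OF Y] in auto)
  also have "\<dots> = - (\<Sum>i\<in>{1..card Y}. f (i, row_len Y i) * row_weight Y i)"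
    unfolding sum_negf
    by (rule arg_cong[where f = uminus], rule sum.mono_neutral_left)
       (auto simp: CR_def row_weight_non_corner[OF Y])
  finally show ?thesis .
qed

lemma row_weight_moments:
  assumes Y: "young_diagram Y"
  shows "(\<Sum>i\<in>{1..card Y}. row_weight Y i) = - real (card Y)"
    and "(\<Sum>i\<in>{1..card Y}. row_end_content Y i * row_weight Y i)
          = - 2 * real_of_int (\<Sum>u\<in>Y. content u)"
  using residue_moments[OF yd_finite[OF Y] finite_atLeastAtMost row_end_content_inj[OF Y]
                           content_product_identity[OF Y]]
  unfolding row_weight_def by (simp_all add: ac_simps)

lemma corner_sums:
  assumes Y: "young_diagram Y"
  shows "(\<Sum>u\<in>corners Y. 1 / real (hook_prod (Y - {u}))) = real (card Y) / real (hook_prod Y)"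
    and "(\<Sum>u\<in>corners Y. real_of_int (content u) / real (hook_prod (Y - {u})))
         = 2 * real_of_int (\<Sum>u\<in>Y. content u) / real (hook_prod Y)"
proof -
  have H: "real (hook_prod Y) > 0" by (rule hook_prod_pos[OF Y])
  have scaled: "(\<Sum>u\<in>corners Y. f u / real (hook_prod (Y - {u})))
      = (\<Sum>u\<in>corners Y. f u * (real (hook_prod Y) / real (hook_prod (Y - {u})))) / real (hook_prod Y)"
    for f :: "nat \<times> nat \<Rightarrow> real"
    using H by (simp add: sum_divide_distrib)
  show "(\<Sum>u\<in>corners Y. 1 / real (hook_prod (Y - {u}))) = real (card Y) / real (hook_prod Y)"
    using scaled[of "\<lambda>_. 1"] corner_sum_as_row_sum[OF Y, of "\<lambda>_. 1"] row_weight_moments(1)[OF Y]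
    by simp
  have "real_of_int (content (i, row_len Y i)) = row_end_content Y i" for i
    unfolding content_def row_end_content_def by simp
  then show "(\<Sum>u\<in>corners Y. real_of_int (content u) / real (hook_prod (Y - {u})))
         = 2 * real_of_int (\<Sum>u\<in>Y. content u) / real (hook_prod Y)"
    using scaled[of "\<lambda>u. real_of_int (content u)"]
      corner_sum_as_row_sum[OF Y, of "\<lambda>u. real_of_int (content u)"] row_weight_moments(2)[OF Y]
    by simp
qed

section \<open>Removing boxes\<close>

lemma corners_iff:
  "u \<in> corners Y \<longleftrightarrow> u \<in> Y \<and> (fst u + 1, snd u) \<notin> Y \<and> (fst u, snd u + 1) \<notin> Y"
  unfolding corners_def by (cases u) auto

lemma yd_remove_iff:
  assumes Y: "young_diagram Y" and D: "D \<subseteq> Y"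
  shows "young_diagram (Y - D) \<longleftrightarrow>
    (\<forall>a b a' b'. (a,b) \<in> Y - D \<and> (a',b') \<in> D \<longrightarrow> \<not> (a' \<le> a \<and> b' \<le> b))"
proof
  assume Z: "young_diagram (Y - D)"
  show "\<forall>a b a' b'. (a,b) \<in> Y - D \<and> (a',b') \<in> D \<longrightarrow> \<not> (a' \<le> a \<and> b' \<le> b)"
  proof (intro allI impI notI)
    fix a b a' b' assume h: "(a,b) \<in> Y - D \<and> (a',b') \<in> D" and l: "a' \<le> a \<and> b' \<le> b"
    have "1 \<le> a'" "1 \<le> b'" using yd_positive[OF Y, of a' b'] h D by auto
    then have "(a',b') \<in> Y - D" using yd_down_closed[OF Z, of a b a' b'] h l by auto
    then show False using h by simp
  qed
next
  assume h: "\<forall>a b a' b'. (a,b) \<in> Y - D \<and> (a',b') \<in> D \<longrightarrow> \<not> (a' \<le> a \<and> b' \<le> b)"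
  have "(x',y') \<in> Y - D" if "(x,y) \<in> Y - D" "1 \<le> x'" "x' \<le> x" "1 \<le> y'" "y' \<le> y" for x y x' y'
    using that yd_down_closed[OF Y, of x y x' y'] h by blast
  then show "young_diagram (Y - D)"
    using yd_finite[OF Y] yd_positive[OF Y] unfolding young_diagram_def by blast
qed

lemma yd_remove_corner:
  assumes Y: "young_diagram Y" and u: "u \<in> corners Y"
  shows "young_diagram (Y - {u})"
proof -
  obtain x y where uxy: "u = (x,y)" by force
  have uY: "(x,y) \<in> Y" and n: "(x+1,y) \<notin> Y" "(x,y+1) \<notin> Y" using u uxy unfolding corners_def by auto
  have "(x+1,y) \<in> Y \<or> (x,y+1) \<in> Y" if "(a,b) \<in> Y - {(x,y)}" "x \<le> a" "y \<le> b" for a b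
  proof (cases "x < a")
    case True
    then show ?thesis using that yd_down_closed[OF Y, of a b "x+1" y] yd_positive[OF Y uY] by auto
  next
    case False
    then show ?thesis using that yd_down_closed[OF Y, of a b x "y+1"] yd_positive[OF Y uY] by auto
  qed
  then show ?thesis unfolding uxy using yd_remove_iff[OF Y, of "{(x,y)}"] uY n by blast
qed

lemma horizontal_domino_removable:
  assumes Y: "young_diagram Y" and a: "(x,y) \<in> Y" "(x,y+1) \<in> Y"
  shows "young_diagram (Y - {(x,y),(x,y+1)}) \<longleftrightarrow> (x+1,y) \<notin> Y \<and> (x,y+2) \<notin> Y"
proof -
  have pos: "1 \<le> x" "1 \<le> y" using yd_positive[OF Y a(1)] by auto
  have blocked: "(x+1,y) \<in> Y \<or> (x,y+2) \<in> Y"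
    if "(a,b) \<in> Y - {(x,y),(x,y+1)}" "x \<le> a" "y \<le> b" for a b
  proof (cases "x < a")
    case True
    then show ?thesis using that yd_down_closed[OF Y, of a b "x+1" y] pos by auto
  next
    case False
    then have "y + 2 \<le> b" using that by auto
    then show ?thesis using that False yd_down_closed[OF Y, of a b x "y+2"] pos by auto
  qed
  have D: "{(x,y),(x,y+1)} \<subseteq> Y" using a by simp
  show ?thesis
  proof (subst yd_remove_iff[OF Y D], intro iffI conjI)
    assume h: "\<forall>a b a' b'. (a,b) \<in> Y - {(x,y),(x,y+1)} \<and> (a',b') \<in> {(x,y),(x,y+1)} \<longrightarrow> \<not> (a' \<le> a \<and> b' \<le> b)"
    show "(x+1,y) \<notin> Y" using h[rule_format, of "x+1" y x y] by auto
    show "(x,y+2) \<notin> Y" using h[rule_format, of x "y+2" x y] by auto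
  qed (use blocked in fastforce)+
qed

lemma vertical_domino_removable:
  assumes Y: "young_diagram Y" and a: "(x,y) \<in> Y" "(x+1,y) \<in> Y"
  shows "young_diagram (Y - {(x,y),(x+1,y)}) \<longleftrightarrow> (x,y+1) \<notin> Y \<and> (x+2,y) \<notin> Y"
proof -
  have pos: "1 \<le> x" "1 \<le> y" using yd_positive[OF Y a(1)] by auto
  have blocked: "(x,y+1) \<in> Y \<or> (x+2,y) \<in> Y"
    if "(a,b) \<in> Y - {(x,y),(x+1,y)}" "x \<le> a" "y \<le> b" for a b
  proof (cases "y < b")
    case True
    then show ?thesis using that yd_down_closed[OF Y, of a b x "y+1"] pos by auto
  next
    case False
    then have "x + 2 \<le> a" using that by auto
    then show ?thesis using that False yd_down_closed[OF Y, of a b "x+2" y] pos by auto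
  qed
  have D: "{(x,y),(x+1,y)} \<subseteq> Y" using a by simp
  show ?thesis
  proof (subst yd_remove_iff[OF Y D], intro iffI conjI)
    assume h: "\<forall>a b a' b'. (a,b) \<in> Y - {(x,y),(x+1,y)} \<and> (a',b') \<in> {(x,y),(x+1,y)} \<longrightarrow> \<not> (a' \<le> a \<and> b' \<le> b)"
    show "(x,y+1) \<notin> Y" using h[rule_format, of x "y+1" x y] by auto
    show "(x+2,y) \<notin> Y" using h[rule_format, of "x+2" y x y] by auto
  qed (use blocked in fastforce)+
qed

section \<open>Second identity: successive removal of two corners\<close>

abbreviation ct :: "nat \<times> nat \<Rightarrow> real" where
  "ct u \<equiv> real_of_int (content u)"

abbreviation hp :: "(nat \<times> nat) set \<Rightarrow> real" where
  "hp Z \<equiv> real (hook_prod Z)"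

(* Applying the first identity to Y - u for every corner u and then to
  Y itself expresses 2\<Sum>c / H_Y as a double sum over pairs of corners. *)
lemma double_corner_sum:
  assumes Y: "young_diagram Y"
  shows "(\<Sum>u\<in>corners Y. \<Sum>v\<in>corners (Y - {u}). (ct u - ct v) / hp (Y - {u} - {v}))
       = 2 * real_of_int (\<Sum>u\<in>Y. content u) / hp Y"
proof -
  define n where "n = real (card Y)"
  define C where "C = real_of_int (\<Sum>u\<in>Y. content u)"
  have inner: "(\<Sum>v\<in>corners (Y - {u}). (ct u - ct v) / hp (Y - {u} - {v}))
      = ((n + 1) * ct u - 2 * C) / hp (Y - {u})" if u: "u \<in> corners Y" for u
  proof -
    have Z: "young_diagram (Y - {u})" by (rule yd_remove_corner[OF Y u])
    have uY: "u \<in> Y" using u unfolding corners_def by auto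
    have card: "real (card (Y - {u})) = n - 1"
      using uY yd_finite[OF Y] card_gt_0_iff[of Y] unfolding n_def by (auto simp: of_nat_diff)
    have sum: "real_of_int (\<Sum>v\<in>Y - {u}. content v) = C - ct u"
      unfolding C_def using sum_diff1[of Y content u] uY yd_finite[OF Y] by simp
    have "(\<Sum>v\<in>corners (Y - {u}). (ct u - ct v) / hp (Y - {u} - {v}))
        = ct u * (\<Sum>v\<in>corners (Y - {u}). 1 / hp (Y - {u} - {v}))
          - (\<Sum>v\<in>corners (Y - {u}). ct v / hp (Y - {u} - {v}))"
      by (simp add: sum_distrib_left sum_subtractf diff_divide_distrib)
    also have "\<dots> = ct u * ((n - 1) / hp (Y - {u})) - 2 * (C - ct u) / hp (Y - {u})"
      using corner_sums[OF Z] card sum by simp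
    also have "\<dots> = ((n + 1) * ct u - 2 * C) / hp (Y - {u})"
      using hook_prod_pos[OF Z] by (simp add: field_simps)
    finally show ?thesis .
  qed
  have "(\<Sum>u\<in>corners Y. \<Sum>v\<in>corners (Y - {u}). (ct u - ct v) / hp (Y - {u} - {v}))
      = (\<Sum>u\<in>corners Y. ((n + 1) * ct u - 2 * C) / hp (Y - {u}))"
    by (rule sum.cong) (simp_all add: inner)
  also have "\<dots> = (n + 1) * (\<Sum>u\<in>corners Y. ct u / hp (Y - {u})) - 2 * C * (\<Sum>u\<in>corners Y. 1 / hp (Y - {u}))"
    by (simp add: sum_distrib_left sum_subtractf diff_divide_distrib)
  also have "\<dots> = (n + 1) * (2 * C / hp Y) - 2 * C * (n / hp Y)"
    using corner_sums[OF Y] unfolding n_def C_def by simp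
  also have "\<dots> = 2 * C / hp Y" using hook_prod_pos[OF Y] by (simp add: field_simps)
  finally show ?thesis unfolding C_def .
qed

lemma sum_swap_antisymmetric:
  fixes g :: "'a \<times> 'a \<Rightarrow> 'b::linordered_ab_group_add"
  assumes A: "prod.swap ` A = A" and anti: "\<And>p. p \<in> A \<Longrightarrow> g (prod.swap p) = - g p"
  shows "(\<Sum>p\<in>A. g p) = 0"
proof -
  have "(\<Sum>p\<in>A. g p) = (\<Sum>p\<in>prod.swap ` A. g p)" using A by simp
  also have "\<dots> = (\<Sum>p\<in>A. g (prod.swap p))" by (subst sum.reindex) (auto simp: inj_on_def)
  also have "\<dots> = - (\<Sum>p\<in>A. g p)" using anti by (simp add: sum_negf)
  finally show ?thesis by simp
qed

definition corner_pairs :: "(nat \<times> nat) set \<Rightarrow> ((nat \<times> nat) \<times> (nat \<times> nat)) set" where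
  "corner_pairs Y = Sigma (corners Y) (\<lambda>u. corners (Y - {u}))"

lemma finite_corner_pairs: "finite Y \<Longrightarrow> finite (corner_pairs Y)"
  unfolding corner_pairs_def corners_def by (auto intro: finite_subset)

lemma corner_pair_swap:
  assumes p: "(u,v) \<in> corner_pairs Y"
    and nh: "u \<noteq> (fst v, snd v + 1)" and nv: "u \<noteq> (fst v + 1, snd v)"
  shows "(v,u) \<in> corner_pairs Y" "v \<noteq> (fst u, snd u + 1)" "v \<noteq> (fst u + 1, snd u)"
proof -
  have "u \<in> corners Y" "v \<in> corners (Y - {u})" using p unfolding corner_pairs_def by auto
  then have u: "u \<in> Y" "(fst u + 1, snd u) \<notin> Y" "(fst u, snd u + 1) \<notin> Y"
    and v: "v \<in> Y" "v \<noteq> u" "(fst v + 1, snd v) \<notin> Y - {u}" "(fst v, snd v + 1) \<notin> Y - {u}"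
    unfolding corners_iff by auto
  show "v \<noteq> (fst u, snd u + 1)" "v \<noteq> (fst u + 1, snd u)" using u v by auto
  show "(v,u) \<in> corner_pairs Y"
    using u v nh nv unfolding corner_pairs_def mem_Sigma_iff corners_iff by auto
qed

definition hdom_left :: "(nat \<times> nat) set \<Rightarrow> (nat \<times> nat) set" where
  "hdom_left Y = {(x,y). (x,y) \<in> Y \<and> (x,y+1) \<in> Y \<and> young_diagram (Y - {(x,y),(x,y+1)})}"

definition vdom_top :: "(nat \<times> nat) set \<Rightarrow> (nat \<times> nat) set" where
  "vdom_top Y = {(x,y). (x,y) \<in> Y \<and> (x+1,y) \<in> Y \<and> young_diagram (Y - {(x,y),(x+1,y)})}"

lemma sum_HD: "(\<Sum>d\<in>HD Y. f d) = (\<Sum>(x,y)\<in>hdom_left Y. f {(x,y),(x,y+1)})"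
proof -
  have "HD Y = (\<lambda>(x,y). {(x,y),(x,y+1)}) ` hdom_left Y"
    unfolding HD_def hdom_left_def by (rule set_eqI) (simp add: image_iff, blast)
  moreover have "inj_on (\<lambda>(x,y). {(x,y),(x,y+1::nat)}) (hdom_left Y)"
    by (rule inj_onI) (clarsimp simp: doubleton_eq_iff)
  ultimately show ?thesis by (simp add: sum.reindex case_prod_beta')
qed

lemma sum_VD: "(\<Sum>d\<in>VD Y. f d) = (\<Sum>(x,y)\<in>vdom_top Y. f {(x,y),(x+1,y)})"
proof -
  have "VD Y = (\<lambda>(x,y). {(x,y),(x+1,y)}) ` vdom_top Y"
    unfolding VD_def vdom_top_def by (rule set_eqI) (simp add: image_iff, blast)
  moreover have "inj_on (\<lambda>(x,y). {(x,y),(x+1::nat,y)}) (vdom_top Y)"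
    by (rule inj_onI) (clarsimp simp: doubleton_eq_iff)
  ultimately show ?thesis by (simp add: sum.reindex case_prod_beta')
qed

lemma horizontal_corner_pairs:
  assumes Y: "young_diagram Y"
  shows "{p \<in> corner_pairs Y. fst p = (fst (snd p), snd (snd p) + 1)}
       = (\<lambda>(x,y). ((x,y+1),(x,y))) ` hdom_left Y"
proof (intro set_eqI iffI)
  fix p assume "p \<in> {p \<in> corner_pairs Y. fst p = (fst (snd p), snd (snd p) + 1)}"
  then obtain x y where p: "p = ((x,y+1),(x,y))"
    and uC: "(x,y+1) \<in> corners Y" and vC: "(x,y) \<in> corners (Y - {(x,y+1)})"
    unfolding corner_pairs_def by (cases p) auto
  have "(x,y+1) \<in> Y" "(x,y+2) \<notin> Y" "(x,y) \<in> Y" "(x+1,y) \<notin> Y"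
    using uC vC unfolding corners_iff by auto
  then have "(x,y) \<in> hdom_left Y"
    unfolding hdom_left_def using horizontal_domino_removable[OF Y] by simp
  then show "p \<in> (\<lambda>(x,y). ((x,y+1),(x,y))) ` hdom_left Y" using p by force
next
  fix p assume "p \<in> (\<lambda>(x,y). ((x,y+1),(x,y))) ` hdom_left Y"
  then obtain x y where p: "p = ((x,y+1),(x,y))" and q: "(x,y) \<in> hdom_left Y" by auto
  have a: "(x,y) \<in> Y" "(x,y+1) \<in> Y" using q unfolding hdom_left_def by auto
  have b: "(x+1,y) \<notin> Y" "(x,y+2) \<notin> Y"
    using q horizontal_domino_removable[OF Y a] unfolding hdom_left_def by auto
  have "(x+1,y+1) \<notin> Y" using yd_down_closed[OF Y, of "x+1" "y+1" "x+1" y] b yd_positive[OF Y a(1)] by auto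
  then show "p \<in> {p \<in> corner_pairs Y. fst p = (fst (snd p), snd (snd p) + 1)}"
    using a b unfolding p corner_pairs_def by (simp add: corners_iff numeral_2_eq_2)
qed

lemma vertical_corner_pairs:
  assumes Y: "young_diagram Y"
  shows "{p \<in> corner_pairs Y. fst p = (fst (snd p) + 1, snd (snd p))}
       = (\<lambda>(x,y). ((x+1,y),(x,y))) ` vdom_top Y"
proof (intro set_eqI iffI)
  fix p assume "p \<in> {p \<in> corner_pairs Y. fst p = (fst (snd p) + 1, snd (snd p))}"
  then obtain x y where p: "p = ((x+1,y),(x,y))"
    and uC: "(x+1,y) \<in> corners Y" and vC: "(x,y) \<in> corners (Y - {(x+1,y)})"
    unfolding corner_pairs_def by (cases p) auto
  have "(x+1,y) \<in> Y" "(x+2,y) \<notin> Y" "(x,y) \<in> Y" "(x,y+1) \<notin> Y"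
    using uC vC unfolding corners_iff by (auto simp: numeral_2_eq_2)
  then have "(x,y) \<in> vdom_top Y"
    unfolding vdom_top_def using vertical_domino_removable[OF Y] by simp
  then show "p \<in> (\<lambda>(x,y). ((x+1,y),(x,y))) ` vdom_top Y" using p by force
next
  fix p assume "p \<in> (\<lambda>(x,y). ((x+1,y),(x,y))) ` vdom_top Y"
  then obtain x y where p: "p = ((x+1,y),(x,y))" and q: "(x,y) \<in> vdom_top Y" by auto
  have a: "(x,y) \<in> Y" "(x+1,y) \<in> Y" using q unfolding vdom_top_def by auto
  have b: "(x,y+1) \<notin> Y" "(x+2,y) \<notin> Y"
    using q vertical_domino_removable[OF Y a] unfolding vdom_top_def by auto
  have "(x+1,y+1) \<notin> Y" using yd_down_closed[OF Y, of "x+1" "y+1" x "y+1"] b yd_positive[OF Y a(1)] by auto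
  then show "p \<in> {p \<in> corner_pairs Y. fst p = (fst (snd p) + 1, snd (snd p))}"
    using a b unfolding p corner_pairs_def by (simp add: corners_iff numeral_2_eq_2)
qed

(* In the double sum over corner pairs, non-adjacent pairs cancel in pairs; the adjacent
  ones are the removable dominos, with content difference +1 (horizontal) or
  -1 (vertical). *)
lemma corner_pair_sum_dominos:
  assumes Y: "young_diagram Y"
  shows "(\<Sum>u\<in>corners Y. \<Sum>v\<in>corners (Y - {u}). (ct u - ct v) / hp (Y - {u} - {v}))
       = (\<Sum>d\<in>HD Y. 1 / hp (Y - d)) - (\<Sum>d\<in>VD Y. 1 / hp (Y - d))"
proof -
  define P where "P = corner_pairs Y"
  define g where "g = (\<lambda>p. (ct (fst p) - ct (snd p)) / hp (Y - {fst p} - {snd p}))"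
  define H where "H = {p \<in> P. fst p = (fst (snd p), snd (snd p) + 1)}"
  define V where "V = {p \<in> P. fst p = (fst (snd p) + 1, snd (snd p))}"
  define R where "R = P - H - V"
  have finP: "finite P" unfolding P_def using finite_corner_pairs[OF yd_finite[OF Y]] .
  have "(\<Sum>u\<in>corners Y. \<Sum>v\<in>corners (Y - {u}). (ct u - ct v) / hp (Y - {u} - {v})) = (\<Sum>p\<in>P. g p)"
    unfolding P_def corner_pairs_def g_def
    by (subst sum.Sigma) (use yd_finite[OF Y] in \<open>auto intro: finite_subset simp: corners_def case_prod_beta'\<close>)
  also have "\<dots> = (\<Sum>p\<in>H. g p) + (\<Sum>p\<in>V. g p) + (\<Sum>p\<in>R. g p)"
  proof -
    have "P = (H \<union> V) \<union> R" "H \<inter> V = {}" "(H \<union> V) \<inter> R = {}"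
      unfolding R_def H_def V_def by auto
    moreover have "finite H" "finite V" "finite R" unfolding H_def V_def R_def using finP by auto
    ultimately show ?thesis by (simp add: sum.union_disjoint)
  qed
  also have "(\<Sum>p\<in>R. g p) = 0"
  proof (rule sum_swap_antisymmetric)
    have "prod.swap p \<in> R" if "p \<in> R" for p
      using that corner_pair_swap[of "fst p" "snd p" Y] unfolding R_def H_def V_def P_def by (cases p) auto
    then show "prod.swap ` R = R"
      by (auto intro!: image_eqI[where x = "prod.swap p" for p])
    show "g (prod.swap p) = - g p" for p
    proof -
      have "Y - {snd p} - {fst p} = Y - {fst p} - {snd p}" by auto
      then show ?thesis unfolding g_def by (simp add: minus_divide_left)
    qed
  qed
  also have "(\<Sum>p\<in>H. g p) = (\<Sum>d\<in>HD Y. 1 / hp (Y - d))"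
  proof -
    have "Y - {(fst q, snd q + 1)} - {q} = Y - {q, (fst q, snd q + 1)}" for q by auto
    then show ?thesis
      unfolding H_def P_def horizontal_corner_pairs[OF Y] sum_HD
      by (subst sum.reindex) (auto simp: inj_on_def g_def content_def case_prod_beta')
  qed
  also have "(\<Sum>p\<in>V. g p) = - (\<Sum>d\<in>VD Y. 1 / hp (Y - d))"
  proof -
    have "Y - {(fst q + 1, snd q)} - {q} = Y - {q, (fst q + 1, snd q)}" for q by auto
    then show ?thesis
      unfolding V_def P_def vertical_corner_pairs[OF Y] sum_VD
      by (subst sum.reindex) (auto simp: inj_on_def g_def content_def case_prod_beta' sum_negf)
  qed
  finally show ?thesis by simp
qed

theorem proposition4p3:
  fixes Y :: "(nat \<times> nat) set"
  assumes "young_diagram Y"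
  shows "(2 * real_of_int (\<Sum>u\<in>Y. content u) / real (hook_prod Y)
           = (\<Sum>u\<in>corners Y. real_of_int (content u) / real (hook_prod (Y - {u}))))
       \<and> (2 * real_of_int (\<Sum>u\<in>Y. content u) / real (hook_prod Y)
           = (\<Sum>d\<in>HD Y. 1 / real (hook_prod (Y - d)))
             - (\<Sum>d\<in>VD Y. 1 / real (hook_prod (Y - d))))"
proof
  show "2 * real_of_int (\<Sum>u\<in>Y. content u) / real (hook_prod Y)
      = (\<Sum>u\<in>corners Y. real_of_int (content u) / real (hook_prod (Y - {u})))"
    using corner_sums(2)[OF assms] by simp
  show "2 * real_of_int (\<Sum>u\<in>Y. content u) / real (hook_prod Y)
      = (\<Sum>d\<in>HD Y. 1 / real (hook_prod (Y - d))) - (\<Sum>d\<in>VD Y. 1 / real (hook_prod (Y - d)))"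
    using double_corner_sum[OF assms] corner_pair_sum_dominos[OF assms] by simp
qed

end
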